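(* Under the setting described in the context, \begin{align*} \Psi & = \sum_{k=0}^{\infty} P_{\lambda++}^k P_{\lambda+-} \left(I- \lambda^{-1} U\right)^{-k-1} \\ & = \sum_{n=0}^{\infty} \left(I- \mu^{-1}T_{++}\right)^{-n-1}P_{\mu+-}V_\mu^n \\ & = \sum_{m=0}^{\infty} Q^m\left(I-\mu^{-1}T_{++}\right)^{-1} \left(P_{\lambda+-}W + P_{\mu+-}\right)W^m, \end{align*} where \[ Q:= \left(I-\mu^{-1}T_{++}\right)^{-1}\left(I+\lambda^{-1}T_{++}\right), \quad W := \left(I + \mu^{-1}U\right)\left(I- \lambda^{-1}U\right)^{-1}, \] and $P_{\mu} := I + \mu^{-1}T$, analogously to $P_\lambda$.
   Context: Consider a fluid queue $\{X_t,\varphi_t\}$ whose phase $\varphi_t$ is a continuous-time Markov chain on a finite state space $\mathcal{S}=\mathcal{S}_+\cup\mathcal{S}_-$ with generator $T$, and whose level moves at unit rates: rate $+1$ in phases of $\mathcal{S}_+$ and rate $-1$ in phases of $\mathcal{S}_-$. Partition $T$ into blocks $T_{++},T_{+-},T_{-+},T_{--}$ according to $\mathcal{S}_+,\mathcal{S}_-$. Let $\Psi$ be the return probability matrix: $\Psi_{ij}$ is the probability that the fluid, starting in phase $i\in\mathcal{S}_+$ at some level, first returns to that level (from above) in phase $j\in\mathcal{S}_-$; equivalently $\Psi$ is the minimal nonnegative solution of $T_{+-} + \Psi T_{--} + T_{++}\Psi + \Psi T_{-+}\Psi = 0$. Let $U := T_{--} + T_{-+}\Psi$ be the generator of the phase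 of the downward record process. For uniformization rates $\lambda,\mu>0$ (large enough that the matrices below are stochastic), set $P_\lambda := I + \lambda^{-1}T$, $P_\mu := I+\mu^{-1}T$, $V_\mu := I + \mu^{-1}U$, with $P_{\lambda++}, P_{\lambda+-}, P_{\mu+-}$ the corresponding sub-blocks. *)

theory Defs
  imports "HOL-Analysis.Analysis"
begin

text \<open>Phase space S = S+ \<union> S-, modelled as the disjoint sum type 'p + 'm
  (Inl = phases in S+, Inr = phases in S-). Matrices are real^'col^'row.\<close>

definition generator :: "real^'s^'s \<Rightarrow> bool" where
  "generator T \<longleftrightarrow> (\<forall>i j. i \<noteq> j \<longrightarrow> 0 \<le> T$i$j) \<and> (\<forall>i. (\<Sum>j\<in>UNIV. T$i$j) = 0)"

definition stochastic :: "real^'s^'s \<Rightarrow> bool" where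
  "stochastic P \<longleftrightarrow> (\<forall>i j. 0 \<le> P$i$j) \<and> (\<forall>i. (\<Sum>j\<in>UNIV. P$i$j) = 1)"

definition nonneg_mat :: "real^'n^'m \<Rightarrow> bool" where
  "nonneg_mat A \<longleftrightarrow> (\<forall>i j. 0 \<le> A$i$j)"

definition blk_pp :: "'a^('p::finite+'m::finite)^('p+'m) \<Rightarrow> 'a^'p^'p" where
  "blk_pp A = (\<chi> i j. A $ Inl i $ Inl j)"
definition blk_pm :: "'a^('p::finite+'m::finite)^('p+'m) \<Rightarrow> 'a^'m^'p" where
  "blk_pm A = (\<chi> i j. A $ Inl i $ Inr j)"
definition blk_mp :: "'a^('p::finite+'m::finite)^('p+'m) \<Rightarrow> 'a^'p^'m" where
  "blk_mp A = (\<chi> i j. A $ Inr i $ Inl j)"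
definition blk_mm :: "'a^('p::finite+'m::finite)^('p+'m) \<Rightarrow> 'a^'m^'m" where
  "blk_mm A = (\<chi> i j. A $ Inr i $ Inr j)"

fun mpow :: "'a::semiring_1^'n^'n \<Rightarrow> nat \<Rightarrow> 'a^'n^'n" where
  "mpow A 0 = mat 1"
| "mpow A (Suc k) = A ** mpow A k"

definition riccati_sol :: "real^('p::finite+'m::finite)^('p+'m) \<Rightarrow> real^'m^'p \<Rightarrow> bool" where
  "riccati_sol T X \<longleftrightarrow>
     blk_pm T + X ** blk_mm T + blk_pp T ** X + X ** blk_mp T ** X = 0"

definition is_Psi :: "real^('p::finite+'m::finite)^('p+'m) \<Rightarrow> real^'m^'p \<Rightarrow> bool" where
  "is_Psi T X \<longleftrightarrow> nonneg_mat X \<and> riccati_sol T X \<and>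
     (\<forall>Y. nonneg_mat Y \<and> riccati_sol T Y \<longrightarrow> (\<forall>i j. X$i$j \<le> Y$i$j))"

text \<open>Generator of the phase of the downward record process: U = T-- + T-+ Psi.\<close>
definition down_gen :: "real^('p::finite+'m::finite)^('p+'m) \<Rightarrow> real^'m^'p \<Rightarrow> real^'m^'m" where
  "down_gen T X = blk_mm T + blk_mp T ** X"

definition unif :: "real \<Rightarrow> real^'n^'n \<Rightarrow> real^'n^'n" where
  "unif r A = mat 1 + (1 / r) *\<^sub>R A"

end

theory Submission
  imports Defs
begin

text \<open>The return matrix \<open>\<Psi>\<close> solves the Sylvester equation
  \<open>T\<^sub>+\<^sub>+ X + X U + T\<^sub>+\<^sub>- = 0\<close>, and each of the three series is the expansion
  \<open>\<Sum>\<^sub>k L\<^sup>k c R\<^sup>k\<close> of a rearrangement \<open>X = L X R + c\<close> of that equation with nonnegative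
  \<open>L\<close>, \<open>R\<close>, \<open>c\<close>; the rearrangements use the resolvents \<open>(I - \<lambda>\<^sup>-\<^sup>1 U)\<^sup>-\<^sup>1\<close> and
  \<open>(I - \<mu>\<^sup>-\<^sup>1 T\<^sub>+\<^sub>+)\<^sup>-\<^sup>1\<close>, which are nonnegative because the matrices are
  diagonally dominant Z-matrices. The partial sums increase to the least nonnegative fixed point
  below \<open>\<Psi>\<close>, which is \<open>\<Psi>\<close> itself: a nonnegative solution \<open>Y \<le> \<Psi>\<close> of the Sylvester
  equation is a supersolution of the Riccati equation, and \<open>\<Psi>\<close>, the limit of the monotone
  iteration \<open>X \<mapsto> X + (2\<lambda>)\<^sup>-\<^sup>1 Ric(X)\<close> from \<open>0\<close>, lies below every nonnegative
  supersolution. The same iteration shows that \<open>\<Psi>\<close> is substochastic, so \<open>U\<close> is a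
  subgenerator.\<close>

lemma less_eq_matrix_iff: "(A::real^'n^'m) \<le> B \<longleftrightarrow> (\<forall>i j. A$i$j \<le> B$i$j)"
  by (simp add: less_eq_vec_def)

lemma nonneg_mat_iff: "nonneg_mat (A::real^'n^'m) \<longleftrightarrow> 0 \<le> A"
  by (simp add: nonneg_mat_def less_eq_matrix_iff)

lemma matrix_mul_nonneg:
  fixes A :: "real^'n^'m" and B :: "real^'k^'n"
  shows "0 \<le> A \<Longrightarrow> 0 \<le> B \<Longrightarrow> 0 \<le> A ** B"
  by (auto simp: less_eq_matrix_iff matrix_matrix_mult_def intro!: sum_nonneg)

lemma matrix_mul_mono:
  fixes A A' :: "real^'n^'m" and B B' :: "real^'k^'n"
  assumes "0 \<le> A" "0 \<le> B" "A \<le> A'" "B \<le> B'"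
  shows "A ** B \<le> A' ** B'"
  using assms unfolding less_eq_matrix_iff matrix_matrix_mult_def
  by (auto intro!: sum_mono mult_mono) (meson order_trans)

lemma matrix_add_rdistrib: "((A::real^'n^'m) + B) ** C = A ** C + B ** C"
  by (simp add: matrix_matrix_mult_def vec_eq_iff sum.distrib distrib_right)

lemma matrix_diff_ldistrib: "(A::real^'n^'m) ** (B - C) = A ** B - A ** C"
  by (simp add: matrix_matrix_mult_def vec_eq_iff sum_subtractf right_diff_distrib)

lemma matrix_diff_rdistrib: "((A::real^'n^'m) - B) ** C = A ** C - B ** C"
  by (simp add: matrix_matrix_mult_def vec_eq_iff sum_subtractf left_diff_distrib)

lemma matrix_mul_scaleR_left: "(k *\<^sub>R (A::real^'n^'m)) ** B = k *\<^sub>R (A ** B)"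
  by (simp add: scalar_matrix_assoc)

lemma matrix_mul_scaleR_right: "(A::real^'n^'m) ** (k *\<^sub>R B) = k *\<^sub>R (A ** B)"
  by (simp add: matrix_scalar_ac scalar_matrix_assoc)

lemmas matrix_mul_distribs = matrix_add_ldistrib matrix_add_rdistrib matrix_diff_ldistrib
  matrix_diff_rdistrib matrix_mul_scaleR_left matrix_mul_scaleR_right

lemma tendsto_matrix_mult [tendsto_intros]:
  fixes f :: "'x \<Rightarrow> real^'n^'m" and g :: "'x \<Rightarrow> real^'k^'n"
  assumes "(f \<longlongrightarrow> A) F" "(g \<longlongrightarrow> B) F"
  shows "((\<lambda>x. f x ** g x) \<longlongrightarrow> A ** B) F"
  unfolding matrix_matrix_mult_def by (intro tendsto_intros assms)

lemma mpow_Suc_right: "mpow A (Suc k) = mpow A k ** A"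
  by (induction k) (simp_all add: matrix_mul_assoc)

lemma mpow_nonneg: "0 \<le> (A::real^'n^'n) \<Longrightarrow> 0 \<le> mpow A k"
proof (induction k)
  case 0
  show ?case by (simp add: less_eq_matrix_iff mat_def)
next
  case (Suc k)
  then show ?case by (simp add: matrix_mul_nonneg)
qed

lemma LIMSEQ_eucl_le_const:
  fixes f :: "nat \<Rightarrow> 'a::ordered_euclidean_space"
  shows "f \<longlonglongrightarrow> l \<Longrightarrow> (\<And>n. B \<le> f n) \<Longrightarrow> B \<le> l"
  using closed_sequentially[OF closed_eucl_atLeast, where f=f and l=l] by auto

lemma LIMSEQ_eucl_le_const2:
  fixes f :: "nat \<Rightarrow> 'a::ordered_euclidean_space"
  shows "f \<longlonglongrightarrow> l \<Longrightarrow> (\<And>n. f n \<le> B) \<Longrightarrow> l \<le> B"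
  using closed_sequentially[OF closed_eucl_atMost, where f=f and l=l] by auto

lemma incseq_bounded_matrix_convergent:
  fixes f :: "nat \<Rightarrow> real^'n^'m"
  assumes inc: "incseq f" and bounded: "\<And>n. f n \<le> B"
  shows "convergent f"
proof -
  have "(\<lambda>n. f n $ i $ j) \<longlonglongrightarrow> (SUP n. f n $ i $ j)" for i j
  proof (rule LIMSEQ_incseq_SUP)
    show "bdd_above (range (\<lambda>n. f n $ i $ j))"
      using bounded by (auto simp: less_eq_matrix_iff bdd_above_def)
    show "incseq (\<lambda>n. f n $ i $ j)"
      using inc by (auto simp: incseq_def less_eq_matrix_iff)
  qed
  then have "f \<longlonglongrightarrow> (\<chi> i j. SUP n. f n $ i $ j)"
    by (auto intro!: vec_tendstoI)
  then show ?thesis by (rule convergentI)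
qed

definition row_sum :: "real^'n^'m \<Rightarrow> 'm \<Rightarrow> real" where
  "row_sum A i = (\<Sum>j\<in>UNIV. A$i$j)"

lemma row_sum_add [simp]: "row_sum (A + B) i = row_sum A i + row_sum B i"
  by (simp add: row_sum_def sum.distrib)

lemma row_sum_diff [simp]: "row_sum (A - B) i = row_sum A i - row_sum B i"
  by (simp add: row_sum_def sum_subtractf)

lemma row_sum_scaleR [simp]: "row_sum (c *\<^sub>R A) i = c * row_sum A i"
  by (simp add: row_sum_def sum_distrib_left)

lemma row_sum_mat_1 [simp]: "row_sum (mat 1 :: real^'n^'n) i = 1"
  by (simp add: row_sum_def mat_def)

lemma row_sum_nonneg: "0 \<le> A \<Longrightarrow> 0 \<le> row_sum A i"
  by (auto simp: row_sum_def less_eq_matrix_iff intro!: sum_nonneg)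

lemma row_sum_matrix_mul: "row_sum ((A::real^'n^'m) ** B) i = (\<Sum>k\<in>UNIV. A$i$k * row_sum B k)"
  unfolding row_sum_def matrix_matrix_mult_def by (simp add: sum_distrib_left) (rule sum.swap)

lemma row_sum_matrix_mul_le:
  assumes "0 \<le> (A::real^'n^'m)" "\<And>k. row_sum B k \<le> 1"
  shows "row_sum (A ** B) i \<le> row_sum A i"
  unfolding row_sum_matrix_mul by (subst (2) row_sum_def, rule sum_mono)
    (use assms in \<open>auto simp: less_eq_matrix_iff intro: mult_left_le\<close>)

lemma tendsto_row_sum: "f \<longlonglongrightarrow> A \<Longrightarrow> (\<lambda>n. row_sum (f n) i) \<longlonglongrightarrow> row_sum A i"
  unfolding row_sum_def by (intro tendsto_intros)

lemma Z_matrix_nonneg_preimage: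
  fixes K :: "real^'n^'n"
  assumes off_diag: "\<And>i j. i \<noteq> j \<Longrightarrow> K$i$j \<le> 0" and row_pos: "\<And>i. 0 < row_sum K i"
    and image_nonneg: "0 \<le> K *v x"
  shows "0 \<le> x"
proof -
  obtain i0 where min: "\<And>k. x$i0 \<le> x$k"
    using ex_is_arg_min_if_finite[of UNIV "\<lambda>k. x$k"] by (auto simp: is_arg_min_linorder)
  have "0 \<le> (K *v x)$i0" using image_nonneg by (simp add: less_eq_vec_def)
  also have "\<dots> = (\<Sum>j\<in>UNIV. K$i0$j * x$j)" by (simp add: matrix_vector_mult_def)
  also have "\<dots> \<le> (\<Sum>j\<in>UNIV. K$i0$j * x$i0)"
  proof (rule sum_mono)
    fix j show "K$i0$j * x$j \<le> K$i0$j * x$i0"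
    proof (cases "j = i0")
      case False
      then show ?thesis using off_diag[of i0 j] min[of j] by (simp add: mult_left_mono_neg)
    qed simp
  qed
  also have "\<dots> = row_sum K i0 * x$i0" by (simp add: row_sum_def sum_distrib_right)
  finally have "0 \<le> x$i0" using row_pos[of i0] by (simp add: zero_le_mult_iff)
  then show ?thesis using min order_trans by (auto simp: less_eq_vec_def)
qed

lemma Z_matrix_inverse_nonneg:
  fixes K :: "real^'n^'n"
  assumes off_diag: "\<And>i j. i \<noteq> j \<Longrightarrow> K$i$j \<le> 0" and row_pos: "\<And>i. 0 < row_sum K i"
  shows "K ** matrix_inv K = mat 1" "matrix_inv K ** K = mat 1" "0 \<le> matrix_inv K"
proof -
  note preimage = Z_matrix_nonneg_preimage[OF off_diag row_pos]
  have "x = 0" if "K *v x = 0" for x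
  proof -
    have "K *v (-x) = - (K *v x)"
      by (simp add: matrix_vector_mult_def vec_eq_iff sum_negf)
    then show ?thesis
      using preimage[of x] preimage[of "-x"] that by (simp add: order_antisym)
  qed
  then have "invertible K"
    using matrix_left_invertible_ker invertible_left_inverse by blast
  then have "K ** matrix_inv K = mat 1 \<and> matrix_inv K ** K = mat 1"
    unfolding invertible_def matrix_inv_def by (rule someI_ex)
  then show right: "K ** matrix_inv K = mat 1" and "matrix_inv K ** K = mat 1"
    by simp_all
  have "0 \<le> column j (matrix_inv K)" for j
  proof (rule preimage)
    have "K *v column j (matrix_inv K) = column j (K ** matrix_inv K)"
      by (simp add: vec_eq_iff column_def matrix_vector_mult_def matrix_matrix_mult_def)
    then show "0 \<le> K *v column j (matrix_inv K)"
      using right by (simp add: less_eq_vec_def column_def mat_def)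
  qed
  then show "0 \<le> matrix_inv K"
    by (simp add: less_eq_vec_def column_def)
qed

definition subgenerator :: "real^'n^'n \<Rightarrow> bool" where
  "subgenerator M \<longleftrightarrow> (\<forall>i j. i \<noteq> j \<longrightarrow> 0 \<le> M$i$j) \<and> (\<forall>i. row_sum M i \<le> 0)"

lemma subgenerator_resolvent:
  fixes M :: "real^'n^'n"
  assumes "subgenerator M" "0 < r"
  shows "(mat 1 - (1/r) *\<^sub>R M) ** matrix_inv (mat 1 - (1/r) *\<^sub>R M) = mat 1"
    and "matrix_inv (mat 1 - (1/r) *\<^sub>R M) ** (mat 1 - (1/r) *\<^sub>R M) = mat 1"
    and "0 \<le> matrix_inv (mat 1 - (1/r) *\<^sub>R M)"
proof -
  have "(mat 1 - (1/r) *\<^sub>R M)$i$j \<le> 0" if "i \<noteq> j" for i j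
    using assms that by (simp add: subgenerator_def mat_def)
  moreover have "0 < row_sum (mat 1 - (1/r) *\<^sub>R M) i" for i
    using assms by (simp add: subgenerator_def) (meson le_less_trans)
  ultimately show "(mat 1 - (1/r) *\<^sub>R M) ** matrix_inv (mat 1 - (1/r) *\<^sub>R M) = mat 1"
    and "matrix_inv (mat 1 - (1/r) *\<^sub>R M) ** (mat 1 - (1/r) *\<^sub>R M) = mat 1"
    and "0 \<le> matrix_inv (mat 1 - (1/r) *\<^sub>R M)"
    using Z_matrix_inverse_nonneg by blast+
qed

lemma unif_mono: "0 < r \<Longrightarrow> M \<le> M' \<Longrightarrow> unif r M \<le> unif r M'"
  by (simp add: unif_def scaleR_left_mono)

lemma sum_UNIV_Plus:
  "(\<Sum>j\<in>(UNIV::('a::finite + 'b::finite) set). f j) = (\<Sum>j\<in>UNIV. f (Inl j)) + (\<Sum>j\<in>UNIV. f (Inr j))"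
  by (subst UNIV_Plus_UNIV[symmetric], subst sum.Plus) (auto simp: comp_def)

lemma row_sum_Inl: "row_sum M (Inl i) = row_sum (blk_pp M) i + row_sum (blk_pm M) i"
  by (simp add: row_sum_def blk_pp_def blk_pm_def sum_UNIV_Plus)

lemma row_sum_Inr: "row_sum M (Inr i) = row_sum (blk_mp M) i + row_sum (blk_mm M) i"
  by (simp add: row_sum_def blk_mp_def blk_mm_def sum_UNIV_Plus)

lemma blocks_nonneg:
  fixes M :: "real^('p::finite + 'm::finite)^('p + 'm)"
  assumes "0 \<le> M"
  shows "0 \<le> blk_pp M" "0 \<le> blk_pm M" "0 \<le> blk_mp M" "0 \<le> blk_mm M"
  using assms by (simp_all add: less_eq_matrix_iff blk_pp_def blk_pm_def blk_mp_def blk_mm_def)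

lemma stochastic_iff: "stochastic P \<longleftrightarrow> 0 \<le> P \<and> (\<forall>i. row_sum P i = 1)"
  by (simp add: stochastic_def less_eq_matrix_iff row_sum_def)

lemma generator_off_diag_blocks:
  assumes "generator T"
  shows "0 \<le> blk_pm T" "0 \<le> blk_mp T"
    "i \<noteq> j \<Longrightarrow> 0 \<le> blk_pp T $ i $ j" "k \<noteq> l \<Longrightarrow> 0 \<le> blk_mm T $ k $ l"
  using assms
  by (simp_all add: generator_def less_eq_matrix_iff blk_pp_def blk_pm_def blk_mp_def blk_mm_def)

lemma generator_row_sums:
  assumes "generator T"
  shows "row_sum (blk_pp T) i + row_sum (blk_pm T) i = 0"
    "row_sum (blk_mp T) k + row_sum (blk_mm T) k = 0"
  using assms unfolding generator_def row_sum_Inl[symmetric] row_sum_Inr[symmetric]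
  by (simp_all add: row_sum_def)

lemma generator_subgenerator_pp:
  assumes "generator T"
  shows "subgenerator (blk_pp T)"
proof -
  have "row_sum (blk_pp T) i \<le> 0" for i
    using generator_row_sums(1)[OF assms, of i]
      row_sum_nonneg[OF generator_off_diag_blocks(1)[OF assms], of i] by linarith
  then show ?thesis
    using generator_off_diag_blocks(3)[OF assms] by (simp add: subgenerator_def)
qed

lemma blk_pp_unif: "blk_pp (unif r M) = unif r (blk_pp M)"
  by (simp add: blk_pp_def unif_def mat_def vec_eq_iff)

lemma blk_mm_unif: "blk_mm (unif r M) = unif r (blk_mm M)"
  by (simp add: blk_mm_def unif_def mat_def vec_eq_iff)

lemma blk_pm_unif: "blk_pm (unif r M) = (1/r) *\<^sub>R blk_pm M"
  by (simp add: blk_pm_def unif_def mat_def vec_eq_iff)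

lemma blk_mp_unif: "blk_mp (unif r M) = (1/r) *\<^sub>R blk_mp M"
  by (simp add: blk_mp_def unif_def mat_def vec_eq_iff)

lemma least_fixpoint_sums:
  fixes X c :: "real^'m^'p" and L :: "real^'p^'p" and R :: "real^'m^'m"
  assumes nonneg: "0 \<le> L" "0 \<le> R" "0 \<le> c" "0 \<le> X"
    and fixpoint: "X = L ** X ** R + c"
    and least: "\<And>Y. 0 \<le> Y \<Longrightarrow> Y \<le> X \<Longrightarrow> Y = L ** Y ** R + c \<Longrightarrow> X \<le> Y"
  shows "(\<lambda>k. mpow L k ** c ** mpow R k) sums X"
proof -
  define S where "S K = (\<Sum>k<K. mpow L k ** c ** mpow R k)" for K
  have term_nonneg: "0 \<le> mpow L k ** c ** mpow R k" for k
    using nonneg by (intro matrix_mul_nonneg mpow_nonneg)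
  have S_Suc: "S (Suc K) = L ** S K ** R + c" for K
  proof (induction K)
    case (Suc K)
    have "S (Suc (Suc K)) = S (Suc K) + mpow L (Suc K) ** c ** mpow R (Suc K)"
      by (simp add: S_def)
    also have "\<dots> = L ** (S K + mpow L K ** c ** mpow R K) ** R + c"
      unfolding Suc.IH mpow.simps(2)[of L] mpow_Suc_right[of R]
      by (simp add: matrix_mul_distribs matrix_mul_assoc)
    finally show ?case by (simp add: S_def)
  qed (simp add: S_def)
  have remainder: "X = S K + mpow L K ** X ** mpow R K" for K
  proof (induction K)
    case (Suc K)
    have "mpow L K ** X ** mpow R K = mpow L K ** (L ** X ** R + c) ** mpow R K"
      using fixpoint by simp
    also have "\<dots> = mpow L (Suc K) ** X ** mpow R (Suc K) + mpow L K ** c ** mpow R K"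
      unfolding mpow_Suc_right[of L] mpow.simps(2)[of R]
      by (simp add: matrix_mul_distribs matrix_mul_assoc)
    finally show ?case using Suc.IH by (simp add: S_def algebra_simps)
  qed (simp add: S_def)
  have "S K \<le> X" for K
    using remainder[of K] nonneg by (metis le_add_same_cancel1 matrix_mul_nonneg mpow_nonneg)
  moreover have "incseq S"
    using term_nonneg by (intro incseq_SucI) (simp add: S_def)
  ultimately obtain Y where Y: "S \<longlonglongrightarrow> Y"
    using incseq_bounded_matrix_convergent convergent_def by metis
  have "(\<lambda>K. S (Suc K)) \<longlonglongrightarrow> L ** Y ** R + c"
    unfolding S_Suc by (intro tendsto_intros Y)
  then have "Y = L ** Y ** R + c"
    using LIMSEQ_unique LIMSEQ_Suc[OF Y] by blast
  moreover have "0 \<le> Y"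
    using Y by (rule LIMSEQ_eucl_le_const) (simp add: S_def sum_nonneg term_nonneg)
  moreover have "Y \<le> X"
    using Y by (rule LIMSEQ_eucl_le_const2) fact
  ultimately have "Y = X"
    using least by (simp add: order_antisym)
  then show ?thesis
    using Y unfolding sums_def S_def by simp
qed

definition sylvester :: "real^'p^'p \<Rightarrow> real^'m^'m \<Rightarrow> real^'m^'p \<Rightarrow> real^'m^'p \<Rightarrow> real^'m^'p" where
  "sylvester A U B X = A ** X + X ** U + B"

lemma eq_iff_scaled_diff:
  fixes P Q S :: "'a::real_vector"
  shows "P - Q = c *\<^sub>R S \<Longrightarrow> c \<noteq> 0 \<Longrightarrow> P = Q \<longleftrightarrow> S = 0"
  by (metis eq_iff_diff_eq_0 scaleR_eq_0_iff)

lemma eq_matrix_mul_right_inverse_iff: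
  fixes X M :: "real^'m^'p" and K R :: "real^'m^'m"
  assumes "K ** R = mat 1" "R ** K = mat 1"
  shows "X = M ** R \<longleftrightarrow> X ** K = M"
  using assms by (metis matrix_mul_assoc matrix_mul_rid)

lemma eq_matrix_mul_left_inverse_iff:
  fixes X M :: "real^'m^'p" and K N :: "real^'p^'p"
  assumes "K ** N = mat 1" "N ** K = mat 1"
  shows "X = N ** M \<longleftrightarrow> K ** X = M"
  using assms by (metis matrix_mul_assoc matrix_mul_lid)

lemma sylvester_right_resolvent_form:
  assumes "0 < r" "(mat 1 - (1/r) *\<^sub>R U) ** R = mat 1" "R ** (mat 1 - (1/r) *\<^sub>R U) = mat 1"
  shows "X = unif r A ** X ** R + ((1/r) *\<^sub>R B) ** R \<longleftrightarrow> sylvester A U B X = 0"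
proof -
  have "X ** (mat 1 - (1/r) *\<^sub>R U) - (unif r A ** X + (1/r) *\<^sub>R B)
      = (- (1/r)) *\<^sub>R sylvester A U B X"
    by (simp add: unif_def sylvester_def matrix_mul_distribs algebra_simps)
  from eq_iff_scaled_diff[OF this]
  have "X ** (mat 1 - (1/r) *\<^sub>R U) = unif r A ** X + (1/r) *\<^sub>R B \<longleftrightarrow> sylvester A U B X = 0"
    using assms(1) by simp
  then show ?thesis
    unfolding matrix_add_rdistrib[symmetric] eq_matrix_mul_right_inverse_iff[OF assms(2,3)] .
qed

lemma sylvester_left_resolvent_form:
  assumes "0 < r" "(mat 1 - (1/r) *\<^sub>R A) ** N = mat 1" "N ** (mat 1 - (1/r) *\<^sub>R A) = mat 1"
  shows "X = N ** X ** unif r U + N ** ((1/r) *\<^sub>R B) \<longleftrightarrow> sylvester A U B X = 0"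
proof -
  have "(mat 1 - (1/r) *\<^sub>R A) ** X - (X ** unif r U + (1/r) *\<^sub>R B)
      = (- (1/r)) *\<^sub>R sylvester A U B X"
    by (simp add: unif_def sylvester_def matrix_mul_distribs algebra_simps)
  from eq_iff_scaled_diff[OF this]
  have "(mat 1 - (1/r) *\<^sub>R A) ** X = X ** unif r U + (1/r) *\<^sub>R B \<longleftrightarrow> sylvester A U B X = 0"
    using assms(1) by simp
  then show ?thesis
    unfolding matrix_mul_assoc[symmetric] matrix_add_ldistrib[symmetric]
      eq_matrix_mul_left_inverse_iff[OF assms(2,3)] .
qed

lemma sylvester_two_sided_resolvent_form:
  assumes "0 < r" "(mat 1 - (1/r) *\<^sub>R U) ** R = mat 1" "R ** (mat 1 - (1/r) *\<^sub>R U) = mat 1"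
    and "0 < s" "(mat 1 - (1/s) *\<^sub>R A) ** N = mat 1" "N ** (mat 1 - (1/s) *\<^sub>R A) = mat 1"
  shows "X = (N ** unif r A) ** X ** (unif s U ** R)
              + N ** (((1/r) *\<^sub>R B) ** (unif s U ** R) + (1/s) *\<^sub>R B)
         \<longleftrightarrow> sylvester A U B X = 0"
proof -
  let ?K = "mat 1 - (1/r) *\<^sub>R U" and ?M = "mat 1 - (1/s) *\<^sub>R A"
  let ?rhs = "unif r A ** X ** unif s U + ((1/r) *\<^sub>R B) ** unif s U + ((1/s) *\<^sub>R B) ** ?K"
  have "?M ** X ** ?K - ?rhs = (- (1/r + 1/s)) *\<^sub>R sylvester A U B X"
    by (simp add: unif_def sylvester_def matrix_mul_distribs matrix_mul_assoc algebra_simps)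
  moreover have "- (1/r + 1/s) \<noteq> 0"
    using assms(1,4) by (smt (verit) divide_pos_pos)
  ultimately have sylvester_iff: "?M ** X ** ?K = ?rhs \<longleftrightarrow> sylvester A U B X = 0"
    by (rule eq_iff_scaled_diff)
  have KR: "((1/s) *\<^sub>R B) ** ?K ** R = (1/s) *\<^sub>R B"
    by (simp only: matrix_mul_assoc[symmetric] assms(2) matrix_mul_rid)
  have "(N ** unif r A) ** X ** (unif s U ** R) + N ** (((1/r) *\<^sub>R B) ** (unif s U ** R) + (1/s) *\<^sub>R B)
      = N ** (?rhs ** R)"
    unfolding matrix_add_rdistrib KR matrix_add_ldistrib by (simp add: matrix_mul_assoc)
  moreover have "X = N ** (Y ** R) \<longleftrightarrow> ?M ** X ** ?K = Y" for Y
    unfolding eq_matrix_mul_left_inverse_iff[OF assms(5,6)]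
    by (rule eq_matrix_mul_right_inverse_iff[OF assms(2,3)])
  ultimately show ?thesis
    using sylvester_iff by simp
qed

definition riccati :: "real^('p::finite + 'm::finite)^('p + 'm) \<Rightarrow> real^'m^'p \<Rightarrow> real^'m^'p" where
  "riccati T X = blk_pm T + X ** blk_mm T + blk_pp T ** X + X ** blk_mp T ** X"

lemma riccati_sol_iff: "riccati_sol T X \<longleftrightarrow> riccati T X = 0"
  by (simp add: riccati_sol_def riccati_def)

definition riccati_step :: "real \<Rightarrow> real^('p::finite + 'm::finite)^('p + 'm) \<Rightarrow> real^'m^'p \<Rightarrow> real^'m^'p" where
  "riccati_step r T X = X + (1 / (2 * r)) *\<^sub>R riccati T X"

text \<open>With the factor \<open>1/2\<close> the identities of both diagonal blocks of the uniformized matrix are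
  absorbed, so the step is a polynomial in \<open>X\<close> with nonnegative coefficients.\<close>
lemma riccati_step_unif:
  assumes "r \<noteq> 0"
  shows "riccati_step r T X = (1/2) *\<^sub>R (blk_pm (unif r T) + X ** blk_mm (unif r T)
           + blk_pp (unif r T) ** X + X ** blk_mp (unif r T) ** X)"
  using assms unfolding blk_pp_unif blk_mm_unif blk_pm_unif blk_mp_unif
  by (simp add: riccati_step_def riccati_def unif_def matrix_mul_distribs algebra_simps)
    (simp add: vec_eq_iff)

lemma tendsto_riccati_step:
  "f \<longlonglongrightarrow> X \<Longrightarrow> (\<lambda>n. riccati_step r T (f n)) \<longlonglongrightarrow> riccati_step r T X"
  unfolding riccati_step_def riccati_def by (intro tendsto_intros)

lemma down_gen_subgenerator:
  assumes "generator T" "0 \<le> Psi" "\<And>i. row_sum Psi i \<le> 1"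
  shows "subgenerator (down_gen T Psi)"
proof -
  note T = generator_off_diag_blocks[OF assms(1)]
  have "0 \<le> (blk_mp T ** Psi)$i$j" for i j
    using matrix_mul_nonneg[OF T(2) assms(2)] by (simp add: less_eq_matrix_iff)
  moreover have "row_sum (blk_mp T ** Psi) i \<le> row_sum (blk_mp T) i" for i
    using row_sum_matrix_mul_le[OF T(2) assms(3)] .
  ultimately show ?thesis
    using T(4) generator_row_sums(2)[OF assms(1)] unfolding subgenerator_def down_gen_def
    by (smt (verit) row_sum_add vector_add_component)
qed

lemma riccati_eq_sylvester_down_gen:
  "riccati T Y = sylvester (blk_pp T) (down_gen T Psi) (blk_pm T) Y - Y ** blk_mp T ** (Psi - Y)"
  by (simp add: riccati_def sylvester_def down_gen_def matrix_mul_distribs matrix_mul_assoc algebra_simps)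

locale fluid_queue =
  fixes T :: "real^('p::finite + 'm::finite)^('p + 'm)" and Psi :: "real^'m^'p" and lam :: real
  assumes generator: "generator T" and is_Psi: "is_Psi T Psi"
    and lam_pos: "0 < lam" and stochastic_unif: "stochastic (unif lam T)"
begin

abbreviation step :: "real^'m^'p \<Rightarrow> real^'m^'p" where
  "step \<equiv> riccati_step lam T"

lemma Psi_nonneg: "0 \<le> Psi"
  using is_Psi by (simp add: is_Psi_def nonneg_mat_iff)

lemma riccati_Psi: "riccati T Psi = 0"
  using is_Psi by (simp add: is_Psi_def riccati_sol_iff)

lemma Psi_le_riccati_solution: "0 \<le> Y \<Longrightarrow> riccati T Y = 0 \<Longrightarrow> Psi \<le> Y"
  using is_Psi by (simp add: is_Psi_def riccati_sol_iff nonneg_mat_iff less_eq_matrix_iff)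

lemma unif_blocks_nonneg:
  "0 \<le> blk_pp (unif lam T)" "0 \<le> blk_pm (unif lam T)"
  "0 \<le> blk_mp (unif lam T)" "0 \<le> blk_mm (unif lam T)"
  using blocks_nonneg stochastic_unif by (auto simp: stochastic_iff)

lemma step_unif:
  "step X = (1/2) *\<^sub>R (blk_pm (unif lam T) + X ** blk_mm (unif lam T)
     + blk_pp (unif lam T) ** X + X ** blk_mp (unif lam T) ** X)"
  using riccati_step_unif lam_pos by (metis less_irrefl)

lemma step_nonneg: "0 \<le> X \<Longrightarrow> 0 \<le> step X"
  using unif_blocks_nonneg unfolding step_unif
  by (intro scaleR_nonneg_nonneg add_nonneg_nonneg matrix_mul_nonneg) auto

lemma step_mono: "0 \<le> X \<Longrightarrow> X \<le> Y \<Longrightarrow> step X \<le> step Y"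
  using unif_blocks_nonneg unfolding step_unif
  by (intro scaleR_left_mono add_mono matrix_mul_mono matrix_mul_nonneg) auto

lemma step_row_sum_le_1:
  assumes "0 \<le> X" "\<And>k. row_sum X k \<le> 1"
  shows "row_sum (step X) i \<le> 1"
proof -
  define P where "P = unif lam T"
  have P: "0 \<le> blk_pp P" "0 \<le> blk_mp P" "row_sum (blk_pp P) i + row_sum (blk_pm P) i = 1"
    "row_sum (blk_mp P) k + row_sum (blk_mm P) k = 1" for k
    using unif_blocks_nonneg stochastic_unif
    by (simp_all add: P_def stochastic_iff flip: row_sum_Inl row_sum_Inr)
  have "row_sum (blk_pp P ** X) i \<le> row_sum (blk_pp P) i"
    using P(1) assms(2) by (rule row_sum_matrix_mul_le)
  moreover have "row_sum (X ** blk_mp P ** X) i \<le> row_sum (X ** blk_mp P) i"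
    using matrix_mul_nonneg[OF assms(1) P(2)] assms(2) by (rule row_sum_matrix_mul_le)
  moreover have "row_sum (X ** blk_mm P) i + row_sum (X ** blk_mp P) i
      = (\<Sum>k\<in>UNIV. X$i$k * (row_sum (blk_mp P) k + row_sum (blk_mm P) k))"
    by (simp add: row_sum_matrix_mul algebra_simps sum.distrib)
  then have "row_sum (X ** blk_mm P) i + row_sum (X ** blk_mp P) i = row_sum X i"
    using P(4) by (simp add: row_sum_def)
  ultimately show ?thesis
    unfolding step_unif P_def[symmetric] using P(3) assms(2)[of i] by simp
qed

lemma iterates_nonneg: "0 \<le> (step ^^ n) 0"
  by (induction n) (simp_all add: step_nonneg)

lemma iterates_le_supersolution:
  assumes "0 \<le> Y" "step Y \<le> Y"
  shows "(step ^^ n) 0 \<le> Y"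
proof (induction n)
  case (Suc n)
  then show ?case
    using step_mono[OF iterates_nonneg Suc] assms(2) by simp
qed (simp add: assms(1))

lemma incseq_iterates: "incseq (\<lambda>n. (step ^^ n) 0)"
proof (rule incseq_SucI)
  show "(step ^^ n) 0 \<le> (step ^^ Suc n) 0" for n
  proof (induction n)
    case 0
    show ?case using step_nonneg[of 0] by simp
  next
    case (Suc n)
    show ?case using step_mono[OF iterates_nonneg Suc] by simp
  qed
qed

lemma iterates_row_sum_le_1: "row_sum ((step ^^ n) 0) i \<le> 1"
proof (induction n arbitrary: i)
  case (Suc n)
  show ?case using step_row_sum_le_1[OF iterates_nonneg Suc] by simp
qed (simp add: row_sum_def)

lemma step_Psi: "step Psi = Psi"
  by (simp add: riccati_step_def riccati_Psi)

lemma iterates_tendsto_Psi: "(\<lambda>n. (step ^^ n) 0) \<longlonglongrightarrow> Psi"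
proof -
  have below_Psi: "(step ^^ n) 0 \<le> Psi" for n
    using iterates_le_supersolution Psi_nonneg step_Psi by simp
  then obtain Z where Z: "(\<lambda>n. (step ^^ n) 0) \<longlonglongrightarrow> Z"
    using incseq_bounded_matrix_convergent[OF incseq_iterates] convergent_def by metis
  have "(\<lambda>n. (step ^^ Suc n) 0) \<longlonglongrightarrow> step Z"
    using tendsto_riccati_step[OF Z] by simp
  then have "step Z = Z"
    using LIMSEQ_unique LIMSEQ_Suc[OF Z] by blast
  then have "riccati T Z = 0"
    using lam_pos by (simp add: riccati_step_def)
  moreover have "0 \<le> Z"
    using Z iterates_nonneg by (rule LIMSEQ_eucl_le_const)
  moreover have "Z \<le> Psi"
    using Z below_Psi by (rule LIMSEQ_eucl_le_const2)
  ultimately have "Z = Psi"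
    using Psi_le_riccati_solution by (simp add: order_antisym)
  then show ?thesis using Z by simp
qed

lemma Psi_le_riccati_supersolution:
  assumes "0 \<le> Y" "riccati T Y \<le> 0"
  shows "Psi \<le> Y"
proof -
  have "step Y \<le> Y"
    using scaleR_nonneg_nonpos[OF _ assms(2), of "1 / (2 * lam)"] lam_pos
    by (simp add: riccati_step_def)
  then show ?thesis
    by (intro LIMSEQ_eucl_le_const2[OF iterates_tendsto_Psi] iterates_le_supersolution[OF assms(1)])
qed

lemma Psi_row_sum_le_1: "row_sum Psi i \<le> 1"
  using LIMSEQ_le_const2[OF tendsto_row_sum[OF iterates_tendsto_Psi]] iterates_row_sum_le_1 by blast

lemma down_gen_Psi_subgenerator: "subgenerator (down_gen T Psi)"
  using down_gen_subgenerator[OF generator Psi_nonneg Psi_row_sum_le_1] .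

lemma sylvester_Psi: "sylvester (blk_pp T) (down_gen T Psi) (blk_pm T) Psi = 0"
  using riccati_eq_sylvester_down_gen[of T Psi Psi] riccati_Psi by simp

lemma Psi_le_sylvester_solution:
  assumes "0 \<le> Y" "Y \<le> Psi" "sylvester (blk_pp T) (down_gen T Psi) (blk_pm T) Y = 0"
  shows "Psi \<le> Y"
proof (rule Psi_le_riccati_supersolution[OF assms(1)])
  have "0 \<le> Y ** blk_mp T ** (Psi - Y)"
    using assms(1,2) generator_off_diag_blocks(2)[OF generator] by (intro matrix_mul_nonneg) simp_all
  then show "riccati T Y \<le> 0"
    using riccati_eq_sylvester_down_gen[of T Y Psi] assms(3) by simp
qed

lemma Psi_sums_if_sylvester_fixpoint_form:
  assumes "0 \<le> L" "0 \<le> R" "0 \<le> c"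
    and "\<And>Y. Y = L ** Y ** R + c \<longleftrightarrow> sylvester (blk_pp T) (down_gen T Psi) (blk_pm T) Y = 0"
  shows "(\<lambda>k. mpow L k ** c ** mpow R k) sums Psi"
  using assms Psi_nonneg sylvester_Psi Psi_le_sylvester_solution by (intro least_fixpoint_sums) auto

lemma unif_down_gen_Psi_nonneg:
  assumes "0 < mu" "stochastic (unif mu T)"
  shows "0 \<le> unif mu (down_gen T Psi)"
proof -
  have "0 \<le> unif mu (blk_mm T)"
    using assms(2) blocks_nonneg(4)[of "unif mu T"] by (simp add: stochastic_iff flip: blk_mm_unif)
  also have "\<dots> \<le> unif mu (down_gen T Psi)"
    using assms(1) matrix_mul_nonneg[OF generator_off_diag_blocks(2)[OF generator] Psi_nonneg]
    by (intro unif_mono) (simp_all add: down_gen_def)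
  finally show ?thesis .
qed

lemma Psi_sums_lam:
  "(\<lambda>k. mpow (blk_pp (unif lam T)) k ** blk_pm (unif lam T)
       ** mpow (matrix_inv (mat 1 - (1 / lam) *\<^sub>R down_gen T Psi)) (k + 1)) sums Psi"
proof -
  define R where "R = matrix_inv (mat 1 - (1 / lam) *\<^sub>R down_gen T Psi)"
  note R = subgenerator_resolvent[OF down_gen_Psi_subgenerator lam_pos, folded R_def]
  have "(\<lambda>k. mpow (unif lam (blk_pp T)) k ** (((1/lam) *\<^sub>R blk_pm T) ** R) ** mpow R k) sums Psi"
  proof (rule Psi_sums_if_sylvester_fixpoint_form)
    show "0 \<le> unif lam (blk_pp T)" "0 \<le> R" "0 \<le> (1/lam) *\<^sub>R blk_pm T ** R"
      using unif_blocks_nonneg R(3) by (simp_all add: blk_pp_unif blk_pm_unif matrix_mul_nonneg)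
    show "Y = unif lam (blk_pp T) ** Y ** R + (1/lam) *\<^sub>R blk_pm T ** R
        \<longleftrightarrow> sylvester (blk_pp T) (down_gen T Psi) (blk_pm T) Y = 0" for Y
      by (rule sylvester_right_resolvent_form[OF lam_pos R(1,2)])
  qed
  then show ?thesis
    by (simp add: R_def blk_pp_unif blk_pm_unif matrix_mul_assoc)
qed

lemma Psi_sums_mu:
  assumes "0 < mu" "stochastic (unif mu T)"
  shows "(\<lambda>n. mpow (matrix_inv (mat 1 - (1 / mu) *\<^sub>R blk_pp T)) (n + 1)
       ** blk_pm (unif mu T) ** mpow (unif mu (down_gen T Psi)) n) sums Psi"
proof -
  define N where "N = matrix_inv (mat 1 - (1 / mu) *\<^sub>R blk_pp T)"
  note N = subgenerator_resolvent[OF generator_subgenerator_pp[OF generator] assms(1), folded N_def]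
  have "(\<lambda>n. mpow N n ** (N ** ((1/mu) *\<^sub>R blk_pm T)) ** mpow (unif mu (down_gen T Psi)) n)
      sums Psi"
  proof (rule Psi_sums_if_sylvester_fixpoint_form)
    show "0 \<le> N ** (1/mu) *\<^sub>R blk_pm T"
      using N(3) generator_off_diag_blocks(1)[OF generator] assms(1)
      by (simp add: matrix_mul_scaleR_right matrix_mul_nonneg scaleR_nonneg_nonneg)
    show "Y = N ** Y ** unif mu (down_gen T Psi) + N ** (1/mu) *\<^sub>R blk_pm T
        \<longleftrightarrow> sylvester (blk_pp T) (down_gen T Psi) (blk_pm T) Y = 0" for Y
      by (rule sylvester_left_resolvent_form[OF assms(1) N(1,2)])
  qed (use N(3) unif_down_gen_Psi_nonneg[OF assms] in auto)
  then show ?thesis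
    by (simp del: mpow.simps(2) add: N_def blk_pm_unif mpow_Suc_right matrix_mul_assoc)
qed

lemma Psi_sums_lam_mu:
  assumes "0 < mu" "stochastic (unif mu T)"
  shows "(\<lambda>m. mpow (matrix_inv (mat 1 - (1 / mu) *\<^sub>R blk_pp T) ** unif lam (blk_pp T)) m
       ** matrix_inv (mat 1 - (1 / mu) *\<^sub>R blk_pp T)
       ** (blk_pm (unif lam T)
             ** (unif mu (down_gen T Psi) ** matrix_inv (mat 1 - (1 / lam) *\<^sub>R down_gen T Psi))
           + blk_pm (unif mu T))
       ** mpow (unif mu (down_gen T Psi) ** matrix_inv (mat 1 - (1 / lam) *\<^sub>R down_gen T Psi)) m)
     sums Psi"
proof -
  define R where "R = matrix_inv (mat 1 - (1 / lam) *\<^sub>R down_gen T Psi)"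
  define N where "N = matrix_inv (mat 1 - (1 / mu) *\<^sub>R blk_pp T)"
  define W where "W = unif mu (down_gen T Psi) ** R"
  note R = subgenerator_resolvent[OF down_gen_Psi_subgenerator lam_pos, folded R_def]
  note N = subgenerator_resolvent[OF generator_subgenerator_pp[OF generator] assms(1), folded N_def]
  have "(\<lambda>m. mpow (N ** unif lam (blk_pp T)) m
      ** (N ** (((1/lam) *\<^sub>R blk_pm T) ** W + (1/mu) *\<^sub>R blk_pm T)) ** mpow W m) sums Psi"
  proof (rule Psi_sums_if_sylvester_fixpoint_form)
    have "0 \<le> W"
      unfolding W_def using unif_down_gen_Psi_nonneg[OF assms] R(3) by (rule matrix_mul_nonneg)
    then show "0 \<le> N ** unif lam (blk_pp T)" "0 \<le> W"
      "0 \<le> N ** (((1/lam) *\<^sub>R blk_pm T) ** W + (1/mu) *\<^sub>R blk_pm T)"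
      using N(3) unif_blocks_nonneg assms(1) generator_off_diag_blocks(1)[OF generator]
      by (simp_all add: blk_pp_unif blk_pm_unif matrix_mul_nonneg add_nonneg_nonneg
          scaleR_nonneg_nonneg)
    show "Y = N ** unif lam (blk_pp T) ** Y ** W
          + N ** (((1/lam) *\<^sub>R blk_pm T) ** W + (1/mu) *\<^sub>R blk_pm T)
        \<longleftrightarrow> sylvester (blk_pp T) (down_gen T Psi) (blk_pm T) Y = 0" for Y
      unfolding W_def by (rule sylvester_two_sided_resolvent_form[OF lam_pos R(1,2) assms(1) N(1,2)])
  qed
  then show ?thesis
    by (simp add: R_def N_def W_def blk_pm_unif matrix_mul_assoc)
qed

end

theorem theorem2:
  fixes T :: "real^('p::finite + 'm::finite)^('p + 'm)"
    and Psi :: "real^'m^'p"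
    and lam mu :: real
  assumes gen: "generator T"
    and Psi: "is_Psi T Psi"
    and lam_pos: "0 < lam" and mu_pos: "0 < mu"
    and P_lam_st: "stochastic (unif lam T)"
    and P_mu_st: "stochastic (unif mu T)"
  shows "((\<lambda>k. mpow (blk_pp (unif lam T)) k ** blk_pm (unif lam T)
              ** mpow (matrix_inv (mat 1 - (1 / lam) *\<^sub>R down_gen T Psi)) (k + 1))
          sums Psi) \<and>
         ((\<lambda>n. mpow (matrix_inv (mat 1 - (1 / mu) *\<^sub>R blk_pp T)) (n + 1)
              ** blk_pm (unif mu T) ** mpow (unif mu (down_gen T Psi)) n)
          sums Psi) \<and>
         ((\<lambda>m. mpow (matrix_inv (mat 1 - (1 / mu) *\<^sub>R blk_pp T) ** unif lam (blk_pp T)) m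
              ** matrix_inv (mat 1 - (1 / mu) *\<^sub>R blk_pp T)
              ** (blk_pm (unif lam T)
                    ** (unif mu (down_gen T Psi) ** matrix_inv (mat 1 - (1 / lam) *\<^sub>R down_gen T Psi))
                  + blk_pm (unif mu T))
              ** mpow (unif mu (down_gen T Psi) ** matrix_inv (mat 1 - (1 / lam) *\<^sub>R down_gen T Psi)) m)
          sums Psi)"
proof -
  interpret fluid_queue T Psi lam
    using gen Psi lam_pos P_lam_st by unfold_locales
  show ?thesis
    using Psi_sums_lam Psi_sums_mu[OF mu_pos P_mu_st] Psi_sums_lam_mu[OF mu_pos P_mu_st] by blast
qed

end
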